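(* Let $(a_n)_{n\ge1}$ be a complex sequence with $a_1\ne0$ and $\sum_n|a_n|n^{\epsilon}<\infty$ for some $\epsilon>0$, and suppose its convolution inverse $(b_n)$ satisfies $\sum_n|b_n|/\sqrt n<\infty$. Then the operator $\mathcal F(a_n)=T(\overline{b_n})ST(a_n)$ is a unitary operator on $L^2[0,\infty)$.
   Context: For a complex sequence $(a_n)_{n\ge1}$, $T(a_n)f(x)=\sum_{n=1}^\infty a_nf(nx)$ ($x>0$); when $\sum|a_n|/\sqrt n<\infty$ this extends to a bounded operator on $L^2[0,\infty)$. The Dirichlet convolution is $(a\ast b)_k=\sum_{mn=k}a_mb_n$; the convolution inverse of $(a_n)$ (with $a_1\ne0$) is the unique $(b_n)$ with $a\ast b=\delta$, where $\delta_1=1$, $\delta_n=0$ for $n>1$. $Sf(x)=\frac1x f(1/x)$. $\overline{b_n}$ denotes the complex-conjugate sequence. *)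

theory Defs
  imports "HOL-Analysis.Analysis"
begin

text \<open>Sequences (a_n) with n \<ge> 1 are modelled as functions nat \<Rightarrow> complex; the value at 0 is ignored.\<close>

definition dirichlet_conv :: "(nat \<Rightarrow> complex) \<Rightarrow> (nat \<Rightarrow> complex) \<Rightarrow> nat \<Rightarrow> complex" where
  "dirichlet_conv a b k = (\<Sum>d | d dvd k. a d * b (k div d))"

definition conv_inverse :: "(nat \<Rightarrow> complex) \<Rightarrow> (nat \<Rightarrow> complex) \<Rightarrow> bool" where
  "conv_inverse a b \<longleftrightarrow> (\<forall>k\<ge>1. dirichlet_conv a b k = (if k = 1 then 1 else 0))"

text \<open>The measure space [0,\<infinity>) (the point 0 is a null set), Lebesgue measure.\<close>
abbreviation Mpos :: "real measure" where
  "Mpos \<equiv> lebesgue_on {0<..}"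

definition L2pos :: "(real \<Rightarrow> complex) set" where
  "L2pos = {f. f \<in> borel_measurable Mpos \<and> integrable Mpos (\<lambda>x. (cmod (f x))\<^sup>2)}"

definition L2norm :: "(real \<Rightarrow> complex) \<Rightarrow> real" where
  "L2norm f = sqrt (\<integral>x. (cmod (f x))\<^sup>2 \<partial>Mpos)"

definition Tmult :: "(nat \<Rightarrow> complex) \<Rightarrow> (real \<Rightarrow> complex) \<Rightarrow> real \<Rightarrow> complex" where
  "Tmult a f x = (\<Sum>n. a (Suc n) * f (real (Suc n) * x))"

definition Sop :: "(real \<Rightarrow> complex) \<Rightarrow> real \<Rightarrow> complex" where
  "Sop f x = f (1 / x) / complex_of_real x"

definition Fop :: "(nat \<Rightarrow> complex) \<Rightarrow> (nat \<Rightarrow> complex) \<Rightarrow> (real \<Rightarrow> complex) \<Rightarrow> real \<Rightarrow> complex" where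
  "Fop a b f = Tmult (\<lambda>n. cnj (b n)) (Sop (Tmult a f))"

text \<open>Unitary operator on L^2[0,\<infinity>), for an operator given on representatives:
  well defined on a.e.-classes, maps L2 into L2, linear, norm preserving and onto.\<close>
definition unitary_L2 :: "((real \<Rightarrow> complex) \<Rightarrow> real \<Rightarrow> complex) \<Rightarrow> bool" where
  "unitary_L2 U \<longleftrightarrow>
     (\<forall>f\<in>L2pos. \<forall>g\<in>L2pos. (AE x in Mpos. f x = g x) \<longrightarrow> (AE x in Mpos. U f x = U g x)) \<and>
     (\<forall>f\<in>L2pos. U f \<in> L2pos \<and> L2norm (U f) = L2norm f) \<and>
     (\<forall>f\<in>L2pos. \<forall>g\<in>L2pos. \<forall>c::complex.
        AE x in Mpos. U (\<lambda>y. f y + c * g y) x = U f x + c * U g x) \<and>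
     (\<forall>g\<in>L2pos. \<exists>f\<in>L2pos. AE x in Mpos. U f x = g x)"

end

theory Submission
  imports Defs
begin

(* Every operator in the theorem is an instance of a dilation series
       D(c,r) f (x) = \<Sum>n c(n) f(r(n) x)      with all r(n) > 0.
   We first develop a small L^2 theory of such series on (0,\<infinity>), for "admissible" weights,
   i.e. \<Sum>n |c(n)| / sqrt(r(n)) < \<infinity>:
   (1) D(c,r) maps L^2 into L^2, the series converges absolutely a.e., and D(c,r) respects
       a.e. equality and is linear (Cauchy-Schwarz plus the dilation rule for integrals);
   (2) the adjoint of D(c,r) is D(conj c / r, 1/r);
   (3) D(c,r) D(d,s) is a.e. the absolutely convergent double series over all pairs (m,n).
   T(\<alpha>) is D(\<alpha>(n+1), n+1) and T*(\<alpha>) its adjoint.  By (3) Dirichlet convolution becomes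
   composition: T(\<alpha>) T(\<beta>) = I and T*(\<alpha>) T*(\<beta>) = I if \<alpha> * \<beta> = \<delta>, while T(\<beta>) and T*(\<beta>)
   commute.  The reflection S is an isometric involution with S T(conj b) S = T*(b), so S F = T*(b) T(a).
   Hence |SFf|^2 = <T(a)f, T(b) T*(b) T(a) f> = <T(a)f, T*(b) f> = <T(b)T(a)f, f> = |f|^2, and
   f = T(b) T*(a) S g solves S F f = T*(b) T*(a) S g = S g, which gives surjectivity.
   The hypothesis \<Sum> |a(n)| n^\<epsilon> < \<infinity> is only used through \<Sum> |a(n)| / sqrt n < \<infinity>, and a(1) \<noteq> 0
   is implied by the existence of the convolution inverse. *)


section \<open>Dilations and the inversion x \<mapsto> 1/x on (0,\<infinity>)\<close>

lemma dil_measurable: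
  assumes r: "r > (0::real)"
  shows "(\<lambda>x. r * x) \<in> Mpos \<rightarrow>\<^sub>M Mpos"
proof -
  have e: "(\<lambda>x::real. r * x) = (*\<^sub>R) r" by (auto simp: fun_eq_iff)
  have "(\<lambda>x. r * x) \<in> lebesgue \<rightarrow>\<^sub>M lebesgue"
    unfolding e by (rule lebesgue_measurable_scaling)
  then show ?thesis
    by (rule measurable_restrict_space3) (use r in auto)
qed

lemma dil_comp_measurable:
  fixes f :: "real \<Rightarrow> 'b::topological_space"
  assumes "r > 0" "f \<in> borel_measurable Mpos"
  shows "(\<lambda>x. f (r * x)) \<in> borel_measurable Mpos"
  using measurable_compose[OF dil_measurable[OF assms(1)] assms(2)] by (simp add: o_def)

lemma inversion_image: "(\<lambda>x::real. 1 / x) ` {0<..} = {0<..}"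
proof (intro set_eqI iffI)
  fix x :: real assume "x \<in> {0<..}"
  then show "x \<in> (\<lambda>x. 1 / x) ` {0<..}" by (intro image_eqI[of _ _ "1 / x"]) auto
qed auto

text \<open>Inversion is measurable on (0,\<infinity>): it is a differentiable bijection, so it maps
  Lebesgue measurable sets to Lebesgue measurable sets.\<close>
lemma inv_measurable: "(\<lambda>x::real. 1 / x) \<in> Mpos \<rightarrow>\<^sub>M Mpos"
proof (rule measurableI)
  fix A assume A: "A \<in> sets Mpos"
  have sub: "A \<subseteq> {0<..}" using A sets.sets_into_space by fastforce
  have eq: "(\<lambda>x::real. 1 / x) -` A \<inter> space Mpos = (\<lambda>x. 1 / x) ` A"
  proof (intro set_eqI iffI)
    fix x assume "x \<in> (\<lambda>x::real. 1 / x) -` A \<inter> space Mpos"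
    then have "1 / x \<in> A" "x > 0" by auto
    then show "x \<in> (\<lambda>x. 1 / x) ` A" by (intro image_eqI[of _ _ "1 / x"]) auto
  next
    fix x assume "x \<in> (\<lambda>x::real. 1 / x) ` A"
    then obtain y where "y \<in> A" "x = 1 / y" by auto
    with sub show "x \<in> (\<lambda>x::real. 1 / x) -` A \<inter> space Mpos" by auto
  qed
  have "(\<lambda>x::real. 1 / x) differentiable_on {0<..}"
    by (auto intro!: derivative_intros simp: differentiable_on_def)
  then have "(\<lambda>x::real. 1 / x) ` A \<in> sets (lebesgue_on ((\<lambda>x. 1 / x) ` {0<..}))"
    by (intro differentiable_image_in_sets_lebesgue_on) (use A in auto)
  then show "(\<lambda>x::real. 1 / x) -` A \<inter> space Mpos \<in> sets Mpos"
    using eq by (simp add: inversion_image)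
qed auto

lemma inv_comp_measurable:
  fixes f :: "real \<Rightarrow> 'b::topological_space"
  assumes "f \<in> borel_measurable Mpos"
  shows "(\<lambda>x. f (1 / x)) \<in> borel_measurable Mpos"
  using measurable_compose[OF inv_measurable assms] by (simp add: o_def)

lemma nn_integral_dilation:
  fixes g :: "real \<Rightarrow> ennreal"
  assumes r: "r > 0" and g: "g \<in> borel_measurable Mpos"
  shows "(\<integral>\<^sup>+x. g (r * x) \<partial>Mpos) = ennreal (1 / r) * (\<integral>\<^sup>+x. g x \<partial>Mpos)"
proof -
  define h where "h = (\<lambda>x. if x \<in> {0::real<..} then g x else 0)"
  have h: "h \<in> borel_measurable lebesgue"
    using g unfolding h_def by (subst (asm) measurable_restrict_space_iff[where c=0]) auto
  have "(\<integral>\<^sup>+x. g x \<partial>Mpos) = (\<integral>\<^sup>+x. h x \<partial>lebesgue)"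
    by (subst nn_integral_restrict_space) (auto simp: h_def indicator_def intro!: nn_integral_cong)
  also have "\<dots> = ennreal \<bar>r\<bar> * (\<integral>\<^sup>+x. h (0 + r * x) \<partial>lebesgue)"
    by (rule nn_integral_real_affine_lebesgue[OF h]) (use r in auto)
  also have "(\<integral>\<^sup>+x. h (0 + r * x) \<partial>lebesgue) = (\<integral>\<^sup>+x. g (r * x) \<partial>Mpos)"
    by (subst nn_integral_restrict_space)
       (use r in \<open>auto simp: h_def indicator_def zero_less_mult_iff intro!: nn_integral_cong\<close>)
  finally have "(\<integral>\<^sup>+x. g x \<partial>Mpos) = ennreal r * (\<integral>\<^sup>+x. g (r * x) \<partial>Mpos)" using r by simp
  then have "ennreal (1 / r) * (\<integral>\<^sup>+x. g x \<partial>Mpos)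
      = (ennreal (1 / r) * ennreal r) * (\<integral>\<^sup>+x. g (r * x) \<partial>Mpos)"
    by (simp add: mult.assoc)
  also have "ennreal (1 / r) * ennreal r = 1" using r by (simp add: ennreal_mult[symmetric])
  finally show ?thesis by simp
qed

lemma integral_dilation:
  fixes h :: "real \<Rightarrow> 'a::euclidean_space"
  assumes r: "r > 0" and h: "integrable Mpos h"
  shows "integrable Mpos (\<lambda>x. h (r * x))"
    and "(\<integral>x. h (r * x) \<partial>Mpos) = (1 / r) *\<^sub>R (\<integral>x. h x \<partial>Mpos)"
proof -
  define H where "H = (\<lambda>x. indicator {0::real<..} x *\<^sub>R h x)"
  have H: "integrable lebesgue H"
    using h unfolding H_def by (subst (asm) integrable_restrict_space) auto
  have eq: "H (r * x) = indicator {0<..} x *\<^sub>R h (r * x)" for x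
    using r by (auto simp: H_def indicator_def zero_less_mult_iff)
  have "integrable lebesgue (\<lambda>x. H (0 + r * x))"
    by (rule lebesgue_integrable_real_affine[OF H]) (use r in auto)
  then show "integrable Mpos (\<lambda>x. h (r * x))"
    by (subst integrable_restrict_space) (auto simp: eq)
  have "(\<integral>x. h x \<partial>Mpos) = (\<integral>x. H x \<partial>lebesgue)"
    unfolding H_def by (rule integral_restrict_space) auto
  also have "\<dots> = \<bar>r\<bar> *\<^sub>R (\<integral>x. H (0 + r * x) \<partial>lebesgue)"
    by (rule lebesgue_integral_real_affine) (use r in auto)
  also have "(\<integral>x. H (0 + r * x) \<partial>lebesgue) = (\<integral>x. h (r * x) \<partial>Mpos)"
    unfolding add_0 eq by (rule integral_restrict_space[symmetric]) auto
  finally show "(\<integral>x. h (r * x) \<partial>Mpos) = (1 / r) *\<^sub>R (\<integral>x. h x \<partial>Mpos)"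
    using r by simp
qed

lemma AE_dilation:
  assumes r: "r > (0::real)" and P: "AE x in Mpos. P x"
  shows "AE x in Mpos. P (r * x)"
proof -
  obtain N where N: "\<And>x. x \<in> space Mpos - N \<Longrightarrow> P x" "N \<in> null_sets Mpos"
    using AE_E3[OF P] by blast
  have Nm: "N \<in> sets Mpos" using N(2) by auto
  let ?N' = "(\<lambda>x. r * x) -` N \<inter> space Mpos"
  have N'm: "?N' \<in> sets Mpos" using measurable_sets[OF dil_measurable[OF r] Nm] .
  have "emeasure Mpos ?N' = (\<integral>\<^sup>+x. indicator N (r * x) \<partial>Mpos)"
    using N'm by (simp add: nn_integral_indicator[symmetric] del: nn_integral_indicator)
       (auto intro!: nn_integral_cong simp: indicator_def)
  also have "\<dots> = ennreal (1 / r) * (\<integral>\<^sup>+x. indicator N x \<partial>Mpos)"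
    by (rule nn_integral_dilation[OF r]) (use Nm in simp)
  also have "\<dots> = 0" using N(2) Nm by (simp add: null_sets_def)
  finally have "?N' \<in> null_sets Mpos" using N'm by (simp add: null_sets_def)
  then show ?thesis
    by (rule AE_I') (use N(1) r in \<open>auto, metis mult_pos_pos\<close>)
qed

lemma integral_inversion:
  fixes f :: "real \<Rightarrow> real"
  assumes f: "integrable Mpos f"
  shows "integrable Mpos (\<lambda>x. f (1 / x) / x\<^sup>2)"
    and "(\<integral>x. f (1 / x) / x\<^sup>2 \<partial>Mpos) = (\<integral>x. f x \<partial>Mpos)"
proof -
  have Mpos_abs: "integrable Mpos g \<longleftrightarrow> g absolutely_integrable_on {0<..}" for g :: "real \<Rightarrow> real"
    unfolding set_integrable_def by (rule integrable_restrict_space) simp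
  have der: "((\<lambda>x. 1 / x) has_field_derivative (- 1 / x\<^sup>2)) (at x within {0<..})"
    if "x \<in> {0<..}" for x :: real
    using that by (auto intro!: derivative_eq_intros simp: power2_eq_square field_simps)
  have inj: "inj_on (\<lambda>x::real. 1 / x) {0<..}" by (auto simp: inj_on_def)
  have fa: "f absolutely_integrable_on {0<..}" using f by (simp add: Mpos_abs)
  have "(\<lambda>x. \<bar>- 1 / x\<^sup>2\<bar> * f (1 / x)) absolutely_integrable_on {0<..} \<and>
      integral {0<..} (\<lambda>x. \<bar>- 1 / x\<^sup>2\<bar> * f (1 / x)) = integral ((\<lambda>x. 1 / x) ` {0<..}) f"
    using has_absolute_integral_change_of_variables_1'[OF _ der inj, of f] fa
    by (simp add: inversion_image)
  moreover have "\<And>x::real. \<bar>- 1 / x\<^sup>2\<bar> * f (1 / x) = f (1 / x) / x\<^sup>2" by simp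
  ultimately have 1: "(\<lambda>x. f (1 / x) / x\<^sup>2) absolutely_integrable_on {0<..}"
    and 2: "integral {0<..} (\<lambda>x. f (1 / x) / x\<^sup>2) = integral {0<..} f"
    by (auto simp: inversion_image)
  show "integrable Mpos (\<lambda>x. f (1 / x) / x\<^sup>2)" using 1 by (simp add: Mpos_abs)
  have Mpos_int: "integral\<^sup>L Mpos g = set_lebesgue_integral lebesgue {0<..} g" for g :: "real \<Rightarrow> real"
    unfolding set_lebesgue_integral_def by (rule integral_restrict_space) simp
  show "(\<integral>x. f (1 / x) / x\<^sup>2 \<partial>Mpos) = (\<integral>x. f x \<partial>Mpos)"
    using 1 2 fa by (simp add: Mpos_int set_lebesgue_integral_eq_integral)
qed

text \<open>Inversion preserves null sets: integrate the indicator of a null set after inversion.\<close>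
lemma AE_inversion:
  assumes P: "AE x in Mpos. P x"
  shows "AE x in Mpos. P (1 / x)"
proof -
  obtain N where N: "\<And>x. x \<in> space Mpos - N \<Longrightarrow> P x" "N \<in> null_sets Mpos"
    using AE_E3[OF P] by blast
  have Nm: "N \<in> sets Mpos" using N(2) by auto
  have ii: "integrable Mpos (indicator N :: real \<Rightarrow> real)"
    using N(2) by (intro integrable_real_indicator) (auto simp: null_sets_def)
  have "(\<integral>x. indicator N x \<partial>Mpos) = (0::real)"
  proof -
    have "N \<inter> {0<..} = N" using sets.sets_into_space[OF Nm] by auto
    then show ?thesis using N(2) by (simp add: null_sets_def measure_def)
  qed
  then have "(\<integral>x. (indicator N (1 / x) :: real) / x\<^sup>2 \<partial>Mpos) = 0"
    using integral_inversion(2)[OF ii] by simp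
  then have "AE x in Mpos. (indicator N (1 / x) :: real) / x\<^sup>2 = 0"
    using integral_inversion(1)[OF ii] by (subst (asm) integral_nonneg_eq_0_iff_AE) auto
  then show ?thesis
  proof (rule AE_mp, intro AE_I2 impI)
    fix x assume "x \<in> space Mpos" "(indicator N (1 / x) :: real) / x\<^sup>2 = 0"
    then have "1 / x \<notin> N" "1 / x \<in> space Mpos" by (auto simp: indicator_def)
    then show "P (1 / x)" using N(1) by auto
  qed
qed


section \<open>Elementary facts about L^2(0,\<infinity>)\<close>

lemma L2posD:
  assumes "f \<in> L2pos"
  shows "f \<in> borel_measurable Mpos" "integrable Mpos (\<lambda>x. (cmod (f x))\<^sup>2)"
  using assms by (auto simp: L2pos_def)

lemma L2norm_nonneg: "L2norm f \<ge> 0"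
  unfolding L2norm_def by (simp add: integral_nonneg_AE)

lemma L2pos_AE_cong:
  assumes f: "f \<in> L2pos" and g: "g \<in> borel_measurable Mpos" and ae: "AE x in Mpos. f x = g x"
  shows "g \<in> L2pos" "L2norm g = L2norm f"
proof -
  have ae2: "AE x in Mpos. (cmod (f x))\<^sup>2 = (cmod (g x))\<^sup>2" using ae by eventually_elim simp
  show "g \<in> L2pos" using L2posD(2)[OF f] g integrable_cong_AE[OF _ _ ae2] by (simp add: L2pos_def)
  have [measurable]: "f \<in> borel_measurable Mpos" "g \<in> borel_measurable Mpos"
    using L2posD(1)[OF f] g by auto
  have "(\<integral>x. (cmod (f x))\<^sup>2 \<partial>Mpos) = (\<integral>x. (cmod (g x))\<^sup>2 \<partial>Mpos)"
    by (rule integral_cong_AE[OF _ _ ae2]) measurable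
  then show "L2norm g = L2norm f" unfolding L2norm_def by simp
qed

lemma L2pos_dilation:
  assumes r: "r > 0" and f: "f \<in> L2pos"
  shows "(\<lambda>x. f (r * x)) \<in> L2pos"
    and "(\<integral>x. (cmod (f (r * x)))\<^sup>2 \<partial>Mpos) = (1 / r) * (\<integral>x. (cmod (f x))\<^sup>2 \<partial>Mpos)"
  using integral_dilation[OF r L2posD(2)[OF f]] dil_comp_measurable[OF r L2posD(1)[OF f]]
  by (auto simp: L2pos_def)

lemma cnj_measurable[measurable]:
  "f \<in> borel_measurable M \<Longrightarrow> (\<lambda>x. cnj (f x)) \<in> borel_measurable M"
proof -
  have "cnj \<in> borel_measurable borel"
    by (rule borel_measurable_continuous_onI) (intro continuous_intros)
  then show "f \<in> borel_measurable M \<Longrightarrow> (\<lambda>x. cnj (f x)) \<in> borel_measurable M"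
    using measurable_compose by (auto simp: o_def)
qed

definition L2inner :: "(real \<Rightarrow> complex) \<Rightarrow> (real \<Rightarrow> complex) \<Rightarrow> complex" where
  "L2inner u v = (\<integral>x. u x * cnj (v x) \<partial>Mpos)"

lemma weighted_amgm:
  fixes a b t :: real
  assumes "t > 0"
  shows "a * b \<le> (t * a\<^sup>2 + b\<^sup>2 / t) / 2"
proof -
  have "0 \<le> (sqrt t * a - b / sqrt t)\<^sup>2" by simp
  also have "\<dots> = t * a\<^sup>2 - 2 * a * b + b\<^sup>2 / t"
    using assms by (simp add: power2_eq_square field_simps)
  finally show ?thesis by simp
qed

lemma L2_product_integrable:
  assumes u: "u \<in> L2pos" and v: "v \<in> L2pos" and t: "t > 0"
  shows "integrable Mpos (\<lambda>x. u x * cnj (v x))"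
    and "(\<integral>x. cmod (u x * cnj (v x)) \<partial>Mpos)
           \<le> (t * (\<integral>x. (cmod (u x))\<^sup>2 \<partial>Mpos) + (\<integral>x. (cmod (v x))\<^sup>2 \<partial>Mpos) / t) / 2"
proof -
  have [measurable]: "u \<in> borel_measurable Mpos" "v \<in> borel_measurable Mpos"
    using L2posD(1) u v by auto
  define B where "B = (\<lambda>x. (t * (cmod (u x))\<^sup>2 + (cmod (v x))\<^sup>2 / t) / 2)"
  have iB: "integrable Mpos B"
    using L2posD(2)[OF u] L2posD(2)[OF v] by (auto simp: B_def)
  have b: "cmod (u x * cnj (v x)) \<le> B x" for x
    using weighted_amgm[OF t, of "cmod (u x)" "cmod (v x)"] by (simp add: norm_mult B_def)
  show i: "integrable Mpos (\<lambda>x. u x * cnj (v x))"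
    by (rule Bochner_Integration.integrable_bound[OF iB]) (use b t in \<open>auto simp: B_def\<close>)
  have "(\<integral>x. cmod (u x * cnj (v x)) \<partial>Mpos) \<le> (\<integral>x. B x \<partial>Mpos)"
    by (intro integral_mono iB b integrable_norm i)
  also have "\<dots> = (t * (\<integral>x. (cmod (u x))\<^sup>2 \<partial>Mpos) + (\<integral>x. (cmod (v x))\<^sup>2 \<partial>Mpos) / t) / 2"
    using L2posD(2)[OF u] L2posD(2)[OF v] by (simp add: B_def)
  finally show "(\<integral>x. cmod (u x * cnj (v x)) \<partial>Mpos)
      \<le> (t * (\<integral>x. (cmod (u x))\<^sup>2 \<partial>Mpos) + (\<integral>x. (cmod (v x))\<^sup>2 \<partial>Mpos) / t) / 2" .
qed

lemma L2inner_self: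
  assumes u: "u \<in> L2pos"
  shows "L2inner u u = complex_of_real ((L2norm u)\<^sup>2)"
proof -
  have "L2inner u u = (\<integral>x. complex_of_real ((cmod (u x))\<^sup>2) \<partial>Mpos)"
    unfolding L2inner_def
    by (rule Bochner_Integration.integral_cong[OF refl]) (rule complex_norm_square[symmetric])
  also have "\<dots> = complex_of_real (\<integral>x. (cmod (u x))\<^sup>2 \<partial>Mpos)" by (rule integral_complex_of_real)
  also have "(\<integral>x. (cmod (u x))\<^sup>2 \<partial>Mpos) = (L2norm u)\<^sup>2"
    unfolding L2norm_def by (simp add: integral_nonneg_AE)
  finally show ?thesis .
qed

lemma L2inner_AE_cong:
  assumes "u \<in> borel_measurable Mpos" "v \<in> borel_measurable Mpos"
    and "u' \<in> borel_measurable Mpos" "v' \<in> borel_measurable Mpos"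
    and "AE x in Mpos. u x = u' x" "AE x in Mpos. v x = v' x"
  shows "L2inner u v = L2inner u' v'"
  unfolding L2inner_def using assms(5,6)
  by (intro integral_cong_AE) (use assms(1-4) in \<open>measurable, auto elim!: AE_mp\<close>)


section \<open>The reflection S\<close>

lemma Sop_measurable:
  assumes "f \<in> borel_measurable Mpos"
  shows "Sop f \<in> borel_measurable Mpos"
proof -
  have [measurable]: "(\<lambda>x. f (1 / x)) \<in> borel_measurable Mpos" by (rule inv_comp_measurable[OF assms])
  have [measurable]: "(\<lambda>x::real. x) \<in> borel_measurable Mpos"
    by (intro measurable_restrict_space1 measurable_completion) simp
  show ?thesis unfolding Sop_def[abs_def] by measurable
qed

text \<open>S is an isometry of L^2(0,\<infinity>) (change of variables x \<mapsto> 1/x).\<close>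
lemma Sop_L2:
  assumes f: "f \<in> L2pos"
  shows "Sop f \<in> L2pos" "L2norm (Sop f) = L2norm f"
proof -
  have e: "(cmod (Sop f x))\<^sup>2 = (cmod (f (1 / x)))\<^sup>2 / x\<^sup>2" for x
    by (simp add: Sop_def norm_divide power_divide)
  have i: "integrable Mpos (\<lambda>x. (cmod (f x))\<^sup>2)" using L2posD[OF f] by simp
  show "Sop f \<in> L2pos" using integral_inversion(1)[OF i] Sop_measurable[OF L2posD(1)[OF f]]
    by (simp add: L2pos_def e)
  show "L2norm (Sop f) = L2norm f" using integral_inversion(2)[OF i] by (simp add: L2norm_def e)
qed

lemma Sop_Sop: "x > 0 \<Longrightarrow> Sop (Sop f) x = f x"
  by (simp add: Sop_def field_simps)

lemma Sop_AE_cong: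
  assumes "AE x in Mpos. f x = g x"
  shows "AE x in Mpos. Sop f x = Sop g x"
  using AE_inversion[OF assms] by eventually_elim (simp add: Sop_def)

lemma Sop_linear: "Sop (\<lambda>y. u y + c * v y) x = Sop u x + c * Sop v x"
  by (simp add: Sop_def add_divide_distrib)


section \<open>Dilation series\<close>

text \<open>The dilation series D(c,r) f (x) = \<Sum>n c(n) f(r(n) x).  Every operator of the theorem is
  of this form or is built from such series and the reflection S.\<close>
definition dil_series :: "(nat \<Rightarrow> complex) \<Rightarrow> (nat \<Rightarrow> real) \<Rightarrow> (real \<Rightarrow> complex) \<Rightarrow> real \<Rightarrow> complex" where
  "dil_series c r f x = (\<Sum>n. c n * f (r n * x))"

text \<open>Admissible weights: positive dilation factors with \<Sum>n |c(n)| / sqrt(r(n)) < \<infinity>.  Since a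
  dilation by r has norm 1/sqrt r on L^2, this makes D(c,r) a bounded operator.\<close>
definition admissible :: "(nat \<Rightarrow> complex) \<Rightarrow> (nat \<Rightarrow> real) \<Rightarrow> bool" where
  "admissible c r \<longleftrightarrow> (\<forall>n. r n > 0) \<and> summable (\<lambda>n. cmod (c n) / sqrt (r n))"

lemma admissibleD:
  assumes "admissible c r"
  shows "r n > 0" "summable (\<lambda>n. cmod (c n) / sqrt (r n))"
  using assms by (auto simp: admissible_def)

lemma dil_series_measurable:
  assumes r: "\<And>n. r n > 0" and f: "f \<in> borel_measurable Mpos"
  shows "dil_series c r f \<in> borel_measurable Mpos"
proof -
  have [measurable]: "(\<lambda>x. f (r n * x)) \<in> borel_measurable Mpos" for n
    by (rule dil_comp_measurable[OF r f])
  show ?thesis unfolding dil_series_def[abs_def] by measurable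
qed

lemma cauchy_schwarz_weighted:
  fixes c g r :: "nat \<Rightarrow> real"
  assumes r: "\<And>n. r n > 0" and c: "\<And>n. c n \<ge> 0"
  shows "(\<Sum>n<N. c n * g n)\<^sup>2 \<le> (\<Sum>n<N. c n / sqrt (r n)) * (\<Sum>n<N. c n * sqrt (r n) * (g n)\<^sup>2)"
proof -
  have "(\<Sum>n<N. c n * g n) = (\<Sum>n<N. sqrt (c n / sqrt (r n)) * (sqrt (c n * sqrt (r n)) * g n))"
  proof (intro sum.cong refl)
    fix n
    have "sqrt (c n / sqrt (r n)) * sqrt (c n * sqrt (r n)) = sqrt ((c n)\<^sup>2)"
      using r[of n] by (simp add: real_sqrt_mult[symmetric] power2_eq_square)
    also have "\<dots> = c n" using c[of n] by simp
    finally show "c n * g n = sqrt (c n / sqrt (r n)) * (sqrt (c n * sqrt (r n)) * g n)"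
      by (simp add: mult.assoc[symmetric])
  qed
  also have "(\<dots>)\<^sup>2 \<le> (\<Sum>n<N. (sqrt (c n / sqrt (r n)))\<^sup>2) * (\<Sum>n<N. (sqrt (c n * sqrt (r n)) * g n)\<^sup>2)"
    by (rule Cauchy_Schwarz_ineq_sum)
  also have "\<dots> = (\<Sum>n<N. c n / sqrt (r n)) * (\<Sum>n<N. c n * sqrt (r n) * (g n)\<^sup>2)"
  proof -
    have "(sqrt (c n / sqrt (r n)))\<^sup>2 = c n / sqrt (r n)" "(sqrt (c n * sqrt (r n)))\<^sup>2 = c n * sqrt (r n)" for n
      using r[of n] c[of n] by (simp_all add: less_imp_le)
    then show ?thesis by (simp add: power_mult_distrib)
  qed
  finally show ?thesis .
qed

lemma cauchy_schwarz_weighted_ennreal: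
  fixes c g r :: "nat \<Rightarrow> real"
  assumes r: "\<And>n. r n > 0" and c: "\<And>n. c n \<ge> 0"
  shows "ennreal ((\<Sum>n<N. c n * g n)\<^sup>2)
    \<le> ennreal (\<Sum>n<N. c n / sqrt (r n)) * (\<Sum>n<N. ennreal (c n * sqrt (r n)) * ennreal ((g n)\<^sup>2))"
proof -
  have W0: "(\<Sum>n<N. c n / sqrt (r n)) \<ge> 0" using c r by (intro sum_nonneg) (simp add: less_imp_le)
  have cr: "c n * sqrt (r n) \<ge> 0" for n using c r by (simp add: less_imp_le)
  have "ennreal (\<Sum>n<N. c n * sqrt (r n) * (g n)\<^sup>2)
      = (\<Sum>n<N. ennreal (c n * sqrt (r n) * (g n)\<^sup>2))"
    using cr by (simp add: sum_nonneg)
  also have "\<dots> = (\<Sum>n<N. ennreal (c n * sqrt (r n)) * ennreal ((g n)\<^sup>2))"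
    using cr by (intro sum.cong refl ennreal_mult) auto
  finally have sum_eq: "ennreal (\<Sum>n<N. c n * sqrt (r n) * (g n)\<^sup>2)
      = (\<Sum>n<N. ennreal (c n * sqrt (r n)) * ennreal ((g n)\<^sup>2))" .
  have "ennreal ((\<Sum>n<N. c n * g n)\<^sup>2)
      \<le> ennreal ((\<Sum>n<N. c n / sqrt (r n)) * (\<Sum>n<N. c n * sqrt (r n) * (g n)\<^sup>2))"
    by (rule ennreal_leI[OF cauchy_schwarz_weighted[OF r c]])
  also have "\<dots> = ennreal (\<Sum>n<N. c n / sqrt (r n)) * (\<Sum>n<N. ennreal (c n * sqrt (r n)) * ennreal ((g n)\<^sup>2))"
    using W0 cr by (simp add: ennreal_mult sum_nonneg sum_eq[symmetric])
  finally show ?thesis .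
qed

lemma dil_partial_sum_nn_bound:
  fixes c r :: "nat \<Rightarrow> real" and g :: "real \<Rightarrow> real"
  assumes r: "\<And>n. r n > 0" and c: "\<And>n. c n \<ge> 0"
    and g[measurable]: "g \<in> borel_measurable Mpos"
  shows "(\<integral>\<^sup>+x. ennreal ((\<Sum>n<N. c n * g (r n * x))\<^sup>2) \<partial>Mpos)
     \<le> ennreal ((\<Sum>n<N. c n / sqrt (r n))\<^sup>2) * (\<integral>\<^sup>+x. ennreal ((g x)\<^sup>2) \<partial>Mpos)"
proof -
  define W where "W = (\<Sum>n<N. c n / sqrt (r n))"
  have W0: "W \<ge> 0" unfolding W_def using c r by (intro sum_nonneg divide_nonneg_nonneg) (auto simp: less_imp_le)
  have [measurable]: "(\<lambda>x. g (r n * x)) \<in> borel_measurable Mpos" for n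
    by (rule dil_comp_measurable[OF r g])
  have cr: "c n * sqrt (r n) \<ge> 0" for n using c r by (simp add: less_imp_le)
  have pointwise: "ennreal ((\<Sum>n<N. c n * g (r n * x))\<^sup>2)
      \<le> ennreal W * (\<Sum>n<N. ennreal (c n * sqrt (r n)) * ennreal ((g (r n * x))\<^sup>2))" for x
    unfolding W_def by (rule cauchy_schwarz_weighted_ennreal[OF r c])
  have dilated: "ennreal (c n * sqrt (r n)) * (\<integral>\<^sup>+x. ennreal ((g (r n * x))\<^sup>2) \<partial>Mpos)
      = ennreal (c n / sqrt (r n)) * (\<integral>\<^sup>+x. ennreal ((g x)\<^sup>2) \<partial>Mpos)" for n
  proof -
    have "c n * sqrt (r n) * (1 / r n) = c n / sqrt (r n)"
      using r[of n] by (simp add: field_simps)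
    then have "ennreal (c n * sqrt (r n)) * ennreal (1 / r n) = ennreal (c n / sqrt (r n))"
      using cr[of n] r[of n] by (simp add: ennreal_mult[symmetric])
    moreover have "(\<integral>\<^sup>+x. ennreal ((g (r n * x))\<^sup>2) \<partial>Mpos)
        = ennreal (1 / r n) * (\<integral>\<^sup>+x. ennreal ((g x)\<^sup>2) \<partial>Mpos)"
      by (rule nn_integral_dilation[OF r[of n]]) measurable
    ultimately show ?thesis by (simp add: mult.assoc[symmetric])
  qed
  have "(\<integral>\<^sup>+x. ennreal ((\<Sum>n<N. c n * g (r n * x))\<^sup>2) \<partial>Mpos)
      \<le> (\<integral>\<^sup>+x. ennreal W * (\<Sum>n<N. ennreal (c n * sqrt (r n)) * ennreal ((g (r n * x))\<^sup>2)) \<partial>Mpos)"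
    by (rule nn_integral_mono) (rule pointwise)
  also have "\<dots> = ennreal W * (\<Sum>n<N. ennreal (c n * sqrt (r n)) * (\<integral>\<^sup>+x. ennreal ((g (r n * x))\<^sup>2) \<partial>Mpos))"
    by (simp add: nn_integral_cmult nn_integral_sum)
  also have "\<dots> = ennreal W * (\<Sum>n<N. ennreal (c n / sqrt (r n))) * (\<integral>\<^sup>+x. ennreal ((g x)\<^sup>2) \<partial>Mpos)"
    by (simp add: dilated sum_distrib_right mult.assoc)
  also have "(\<Sum>n<N. ennreal (c n / sqrt (r n))) = ennreal W"
    unfolding W_def using c r by (intro sum_ennreal) (simp add: less_imp_le)
  also have "ennreal W * ennreal W * (\<integral>\<^sup>+x. ennreal ((g x)\<^sup>2) \<partial>Mpos)
      = ennreal (W\<^sup>2) * (\<integral>\<^sup>+x. ennreal ((g x)\<^sup>2) \<partial>Mpos)"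
    using W0 by (simp add: power2_eq_square ennreal_mult)
  finally show ?thesis unfolding W_def .
qed

lemma dil_majorant_nn_bound:
  fixes c r :: "nat \<Rightarrow> real" and g :: "real \<Rightarrow> real"
  assumes r: "\<And>n. r n > 0" and c: "\<And>n. c n \<ge> 0"
    and W: "summable (\<lambda>n. c n / sqrt (r n))"
    and g[measurable]: "g \<in> borel_measurable Mpos" and g0: "\<And>x. g x \<ge> 0"
  shows "(\<integral>\<^sup>+x. (SUP N. ennreal ((\<Sum>n<N. c n * g (r n * x))\<^sup>2)) \<partial>Mpos)
     \<le> ennreal ((\<Sum>n. c n / sqrt (r n))\<^sup>2) * (\<integral>\<^sup>+x. ennreal ((g x)\<^sup>2) \<partial>Mpos)"
proof -
  have [measurable]: "(\<lambda>x. g (r n * x)) \<in> borel_measurable Mpos" for n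
    by (rule dil_comp_measurable[OF r g])
  have cr0: "c n / sqrt (r n) \<ge> 0" for n using c r by (simp add: less_imp_le)
  have inc: "incseq (\<lambda>N x. ennreal ((\<Sum>n<N. c n * g (r n * x))\<^sup>2))"
  proof (intro incseq_SucI le_funI ennreal_leI power_mono)
    fix N x
    show "(\<Sum>n<N. c n * g (r n * x)) \<le> (\<Sum>n<Suc N. c n * g (r n * x))"
      using c g0 by simp
    show "0 \<le> (\<Sum>n<N. c n * g (r n * x))" using c g0 by (intro sum_nonneg) simp
  qed
  have "(\<integral>\<^sup>+x. (SUP N. ennreal ((\<Sum>n<N. c n * g (r n * x))\<^sup>2)) \<partial>Mpos)
      = (SUP N. \<integral>\<^sup>+x. ennreal ((\<Sum>n<N. c n * g (r n * x))\<^sup>2) \<partial>Mpos)"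
    by (rule nn_integral_monotone_convergence_SUP[OF inc]) measurable
  also have "\<dots> \<le> ennreal ((\<Sum>n. c n / sqrt (r n))\<^sup>2) * (\<integral>\<^sup>+x. ennreal ((g x)\<^sup>2) \<partial>Mpos)"
  proof (rule SUP_least)
    fix N
    have "(\<Sum>n<N. c n / sqrt (r n))\<^sup>2 \<le> (\<Sum>n. c n / sqrt (r n))\<^sup>2"
      using cr0 by (intro power_mono sum_le_suminf[OF W] sum_nonneg) auto
    then have "ennreal ((\<Sum>n<N. c n / sqrt (r n))\<^sup>2) * (\<integral>\<^sup>+x. ennreal ((g x)\<^sup>2) \<partial>Mpos)
        \<le> ennreal ((\<Sum>n. c n / sqrt (r n))\<^sup>2) * (\<integral>\<^sup>+x. ennreal ((g x)\<^sup>2) \<partial>Mpos)"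
      by (intro mult_right_mono ennreal_leI) auto
    with dil_partial_sum_nn_bound[OF r c g, where N=N]
    show "(\<integral>\<^sup>+x. ennreal ((\<Sum>n<N. c n * g (r n * x))\<^sup>2) \<partial>Mpos)
        \<le> ennreal ((\<Sum>n. c n / sqrt (r n))\<^sup>2) * (\<integral>\<^sup>+x. ennreal ((g x)\<^sup>2) \<partial>Mpos)"
      by (rule order_trans)
  qed
  finally show ?thesis .
qed

lemma nonneg_series_sq_bound:
  fixes t :: "nat \<Rightarrow> real"
  assumes t: "\<And>n. t n \<ge> 0" and fin: "(SUP N. ennreal ((\<Sum>n<N. t n)\<^sup>2)) \<noteq> \<infinity>"
  shows "summable t" and "ennreal ((suminf t)\<^sup>2) \<le> (SUP N. ennreal ((\<Sum>n<N. t n)\<^sup>2))"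
proof -
  define H where "H = (SUP N. ennreal ((\<Sum>n<N. t n)\<^sup>2))"
  have upper: "ennreal ((\<Sum>n<N. t n)\<^sup>2) \<le> H" for N unfolding H_def by (rule SUP_upper) simp
  have "H \<noteq> \<infinity>" using fin unfolding H_def .
  then have H: "ennreal (enn2real H) = H" by (intro ennreal_enn2real) (simp add: less_top)
  show s: "summable t"
  proof (rule summableI_nonneg_bounded)
    fix N
    have "ennreal ((\<Sum>n<N. t n)\<^sup>2) \<le> ennreal (enn2real H)" using upper[of N] by (simp only: H)
    then have "(\<Sum>n<N. t n)\<^sup>2 \<le> enn2real H" by (subst (asm) ennreal_le_iff) auto
    then show "(\<Sum>n<N. t n) \<le> sqrt (enn2real H)" by (intro real_le_rsqrt)
  qed (rule t)
  have "ennreal ((suminf t)\<^sup>2) \<le> H"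
  proof (rule LIMSEQ_le_const2)
    show "(\<lambda>N. ennreal ((\<Sum>n<N. t n)\<^sup>2)) \<longlonglongrightarrow> ennreal ((suminf t)\<^sup>2)"
      by (intro tendsto_ennrealI tendsto_power summable_LIMSEQ s)
    show "\<exists>N. \<forall>M\<ge>N. ennreal ((\<Sum>n<M. t n)\<^sup>2) \<le> H"
      by (intro exI[of _ 0] allI impI upper)
  qed
  then show "ennreal ((suminf t)\<^sup>2) \<le> (SUP N. ennreal ((\<Sum>n<N. t n)\<^sup>2))" unfolding H_def .
qed

text \<open>The square of the absolute majorant \<Sum>n |c(n)| |f(r(n) x)| of a dilation series, written
  as a supremum of squared partial sums so that it is defined (possibly \<infinity>) everywhere.\<close>
definition dil_majorant :: "(nat \<Rightarrow> complex) \<Rightarrow> (nat \<Rightarrow> real) \<Rightarrow> (real \<Rightarrow> complex) \<Rightarrow> real \<Rightarrow> ennreal" where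
  "dil_majorant c r f x = (SUP N. ennreal ((\<Sum>n<N. cmod (c n) * cmod (f (r n * x)))\<^sup>2))"

lemma dil_majorant_finite:
  assumes adm: "admissible c r" and f: "f \<in> L2pos"
  shows "dil_majorant c r f \<in> borel_measurable Mpos" and "(\<integral>\<^sup>+x. dil_majorant c r f x \<partial>Mpos) < \<infinity>"
proof -
  have r: "\<And>n. r n > 0" using admissibleD(1)[OF adm] .
  have fm[measurable]: "f \<in> borel_measurable Mpos" using L2posD(1)[OF f] .
  have [measurable]: "(\<lambda>x. f (r n * x)) \<in> borel_measurable Mpos" for n
    by (rule dil_comp_measurable[OF r fm])
  show "dil_majorant c r f \<in> borel_measurable Mpos" unfolding dil_majorant_def[abs_def] by measurable
  have "(\<integral>\<^sup>+x. dil_majorant c r f x \<partial>Mpos)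
      \<le> ennreal ((\<Sum>n. cmod (c n) / sqrt (r n))\<^sup>2) * (\<integral>\<^sup>+x. ennreal ((cmod (f x))\<^sup>2) \<partial>Mpos)"
    unfolding dil_majorant_def
    by (rule dil_majorant_nn_bound[OF r _ admissibleD(2)[OF adm]]) auto
  also have "(\<integral>\<^sup>+x. ennreal ((cmod (f x))\<^sup>2) \<partial>Mpos) = ennreal (\<integral>x. (cmod (f x))\<^sup>2 \<partial>Mpos)"
    using L2posD(2)[OF f] by (intro nn_integral_eq_integral) auto
  also have "ennreal ((\<Sum>n. cmod (c n) / sqrt (r n))\<^sup>2) * \<dots> < \<infinity>"
    by (simp add: ennreal_mult_less_top)
  finally show "(\<integral>\<^sup>+x. dil_majorant c r f x \<partial>Mpos) < \<infinity>" .
qed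

text \<open>Boundedness of admissible dilation series: where the majorant is finite the series
  converges absolutely and |D(c,r) f|^2 is bounded by the majorant; hence D(c,r) f is in L^2.\<close>
lemma dil_series_L2:
  assumes adm: "admissible c r" and f: "f \<in> L2pos"
  shows "AE x in Mpos. summable (\<lambda>n. cmod (c n * f (r n * x)))"
    and "dil_series c r f \<in> L2pos"
proof -
  define t where "t = (\<lambda>x n. cmod (c n) * cmod (f (r n * x)))"
  define H where "H = dil_majorant c r f"
  have H: "H x = (SUP N. ennreal ((\<Sum>n<N. t x n)\<^sup>2))" for x by (simp add: H_def t_def dil_majorant_def)
  note Hm = dil_majorant_finite(1)[OF adm f, folded H_def]
  note Hfin = dil_majorant_finite(2)[OF adm f, folded H_def]
  have AEH: "AE x in Mpos. H x \<noteq> \<infinity>" using Hfin by (intro nn_integral_PInf_AE[OF Hm]) auto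
  have t0: "\<And>x n. t x n \<ge> 0" by (simp add: t_def)
  have summ: "summable (t x)" if "H x \<noteq> \<infinity>" for x
    using nonneg_series_sq_bound(1)[OF t0] that unfolding H .
  show "AE x in Mpos. summable (\<lambda>n. cmod (c n * f (r n * x)))"
    using AEH by eventually_elim (use summ in \<open>simp add: t_def norm_mult\<close>)
  have bound: "ennreal ((cmod (dil_series c r f x))\<^sup>2) \<le> H x" if Hx: "H x \<noteq> \<infinity>" for x
  proof -
    have "cmod (dil_series c r f x) \<le> suminf (t x)"
      unfolding dil_series_def using summable_norm[of "\<lambda>n. c n * f (r n * x)"] summ[OF Hx]
      by (simp add: t_def norm_mult)
    then have "(cmod (dil_series c r f x))\<^sup>2 \<le> (suminf (t x))\<^sup>2" by (rule power_mono) simp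
    moreover have "ennreal ((suminf (t x))\<^sup>2) \<le> H x"
      using nonneg_series_sq_bound(2)[OF t0] Hx unfolding H .
    ultimately show ?thesis by (blast intro: order_trans[OF ennreal_leI])
  qed
  have Gm: "dil_series c r f \<in> borel_measurable Mpos"
    by (rule dil_series_measurable[OF admissibleD(1)[OF adm] L2posD(1)[OF f]])
  have "integrable Mpos (\<lambda>x. (cmod (dil_series c r f x))\<^sup>2)"
  proof (rule integrableI_bounded)
    show "(\<lambda>x. (cmod (dil_series c r f x))\<^sup>2) \<in> borel_measurable Mpos" using Gm by measurable
    have "(\<integral>\<^sup>+x. ennreal (norm ((cmod (dil_series c r f x))\<^sup>2)) \<partial>Mpos) \<le> (\<integral>\<^sup>+x. H x \<partial>Mpos)"
      by (intro nn_integral_mono_AE) (use AEH bound in \<open>auto elim!: AE_mp\<close>)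
    also have "\<dots> < \<infinity>" by (rule Hfin)
    finally show "(\<integral>\<^sup>+x. ennreal (norm ((cmod (dil_series c r f x))\<^sup>2)) \<partial>Mpos) < \<infinity>" .
  qed
  then show "dil_series c r f \<in> L2pos" using Gm by (simp add: L2pos_def)
qed

lemma dil_series_AE_cong:
  assumes r: "\<And>n. r n > 0" and ae: "AE x in Mpos. f x = g x"
  shows "AE x in Mpos. dil_series c r f x = dil_series c r g x"
proof -
  have "AE x in Mpos. \<forall>n. f (r n * x) = g (r n * x)"
    by (subst AE_all_countable) (intro allI AE_dilation[OF r ae])
  then show ?thesis by eventually_elim (simp add: dil_series_def)
qed

text \<open>D(c,r) is linear on L^2: for L^2 arguments both series converge absolutely a.e.\<close>
lemma dil_series_linear:
  assumes adm: "admissible c r" and f: "f \<in> L2pos" and g: "g \<in> L2pos"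
  shows "AE x in Mpos. dil_series c r (\<lambda>y. f y + k * g y) x = dil_series c r f x + k * dil_series c r g x"
  using dil_series_L2(1)[OF adm f] dil_series_L2(1)[OF adm g]
proof eventually_elim
  case (elim x)
  have sf: "summable (\<lambda>n. c n * f (r n * x))" by (rule summable_norm_cancel[OF elim(1)])
  have sg: "summable (\<lambda>n. c n * g (r n * x))" by (rule summable_norm_cancel[OF elim(2)])
  have "dil_series c r (\<lambda>y. f y + k * g y) x = (\<Sum>n. c n * f (r n * x) + k * (c n * g (r n * x)))"
    unfolding dil_series_def by (simp add: algebra_simps)
  also have "\<dots> = (\<Sum>n. c n * f (r n * x)) + (\<Sum>n. k * (c n * g (r n * x)))"
    by (rule suminf_add[symmetric]) (use sf sg summable_mult in auto)
  also have "\<dots> = dil_series c r f x + k * dil_series c r g x"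
    unfolding dil_series_def by (simp add: suminf_mult sg)
  finally show ?case .
qed


section \<open>The adjoint of a dilation series\<close>

definition adj_coef :: "(nat \<Rightarrow> complex) \<Rightarrow> (nat \<Rightarrow> real) \<Rightarrow> nat \<Rightarrow> complex" where
  "adj_coef c r n = cnj (c n) / complex_of_real (r n)"

definition adj_scale :: "(nat \<Rightarrow> real) \<Rightarrow> nat \<Rightarrow> real" where
  "adj_scale r n = 1 / r n"

text \<open>Admissibility is inherited by the adjoint weights: |c(n)| / r(n) / sqrt(1 / r(n)) = |c(n)| / sqrt(r(n)).\<close>
lemma admissible_adj:
  assumes adm: "admissible c r"
  shows "admissible (adj_coef c r) (adj_scale r)"
proof -
  have "cmod (adj_coef c r n) / sqrt (adj_scale r n) = cmod (c n) / sqrt (r n)" for n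
  proof -
    have r: "r n > 0" by (rule admissibleD(1)[OF adm])
    then have "sqrt (r n) * sqrt (r n) = r n" by simp
    then show ?thesis using r
      by (simp add: adj_coef_def adj_scale_def norm_divide real_sqrt_divide field_simps)
  qed
  then show ?thesis
    using adm by (simp add: admissible_def adj_scale_def)
qed

lemma adj_coef_adj:
  assumes r: "\<And>n. r n > 0"
  shows "adj_coef (adj_coef c r) (adj_scale r) = c"
proof
  fix n
  have "complex_of_real (r n) \<noteq> 0" using r[of n] by simp
  then show "adj_coef (adj_coef c r) (adj_scale r) n = c n"
    by (simp add: adj_coef_def adj_scale_def)
qed

lemma adj_scale_adj: "adj_scale (adj_scale r) = r"
  by (simp add: adj_scale_def fun_eq_iff)

text \<open>Each term f(r \<cdot>) conj g of the inner product is integrable, with an explicit L^1 bound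
  (weighted AM-GM with weight sqrt r, and |f(r \<cdot>)|^2 = |f|^2 / r).\<close>
lemma dilation_product_bound:
  assumes r: "r > 0" and f: "f \<in> L2pos" and g: "g \<in> L2pos"
  shows "integrable Mpos (\<lambda>x. f (r * x) * cnj (g x))"
    and "(\<integral>x. cmod (f (r * x) * cnj (g x)) \<partial>Mpos)
           \<le> ((\<integral>x. (cmod (f x))\<^sup>2 \<partial>Mpos) + (\<integral>x. (cmod (g x))\<^sup>2 \<partial>Mpos)) / (2 * sqrt r)"
proof -
  show "integrable Mpos (\<lambda>x. f (r * x) * cnj (g x))"
    by (rule L2_product_integrable(1)[OF L2pos_dilation(1)[OF r f] g zero_less_one])
  have "(\<integral>x. cmod (f (r * x) * cnj (g x)) \<partial>Mpos)
      \<le> (sqrt r * (\<integral>x. (cmod (f (r * x)))\<^sup>2 \<partial>Mpos) + (\<integral>x. (cmod (g x))\<^sup>2 \<partial>Mpos) / sqrt r) / 2"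
    by (rule L2_product_integrable(2)[OF L2pos_dilation(1)[OF r f] g]) (use r in simp)
  also have "\<dots> = ((\<integral>x. (cmod (f x))\<^sup>2 \<partial>Mpos) + (\<integral>x. (cmod (g x))\<^sup>2 \<partial>Mpos)) / (2 * sqrt r)"
  proof -
    have "sqrt r * sqrt r = r" using r by simp
    then show ?thesis unfolding L2pos_dilation(2)[OF r f] using r by (simp add: field_simps)
  qed
  finally show "(\<integral>x. cmod (f (r * x) * cnj (g x)) \<partial>Mpos)
      \<le> ((\<integral>x. (cmod (f x))\<^sup>2 \<partial>Mpos) + (\<integral>x. (cmod (g x))\<^sup>2 \<partial>Mpos)) / (2 * sqrt r)" .
qed

lemma dilation_inner_swap:
  assumes r: "r > 0" and f: "f \<in> L2pos" and g: "g \<in> L2pos"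
  shows "L2inner (\<lambda>x. f (r * x)) g = (1 / r) * L2inner f (\<lambda>y. g (1 / r * y))"
proof -
  have "1 / r > 0" using r by simp
  then have "integrable Mpos (\<lambda>y. f y * cnj (g (1 / r * y)))"
    by (rule L2_product_integrable(1)[OF f L2pos_dilation(1)[OF _ g] zero_less_one])
  from integral_dilation(2)[OF r this] show ?thesis
    using r by (simp add: L2inner_def scaleR_conv_of_real)
qed

lemma L2inner_cnj: "L2inner u v = cnj (L2inner v u)"
proof -
  have "cnj (\<integral>x. v x * cnj (u x) \<partial>Mpos) = (\<integral>x. cnj (v x * cnj (u x)) \<partial>Mpos)"
    by (rule Bochner_Integration.integral_cnj[symmetric])
  then show ?thesis
    unfolding L2inner_def by (simp only: complex_cnj_mult complex_cnj_cnj mult.commute)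
qed

text \<open>The inner product <D(c,r) f, g> is the sum of the inner products of the individual
  terms; interchanging sum and integral is justified by the L^1 bounds of the terms, which are
  summable precisely because the weights are admissible.\<close>
lemma dil_series_inner_sums:
  assumes adm: "admissible c r" and f: "f \<in> L2pos" and g: "g \<in> L2pos"
  shows "(\<lambda>n. c n * L2inner (\<lambda>x. f (r n * x)) g) sums L2inner (dil_series c r f) g"
proof -
  have r: "\<And>n. r n > 0" using admissibleD(1)[OF adm] .
  have [measurable]: "f \<in> borel_measurable Mpos" "g \<in> borel_measurable Mpos"
    using L2posD(1) f g by auto
  have [measurable]: "(\<lambda>x. f (r n * x)) \<in> borel_measurable Mpos" for n
    by (rule dil_comp_measurable[OF r]) measurable
  have [measurable]: "dil_series c r f \<in> borel_measurable Mpos"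
    by (rule dil_series_measurable[OF r]) measurable
  define F where "F = (\<lambda>n x. c n * (f (r n * x) * cnj (g x)))"
  note bound = dilation_product_bound[OF r f g]
  have Fi: "integrable Mpos (F n)" for n unfolding F_def using bound(1)[of n] by simp
  define K where "K = ((\<integral>x. (cmod (f x))\<^sup>2 \<partial>Mpos) + (\<integral>x. (cmod (g x))\<^sup>2 \<partial>Mpos)) / 2"
  have nF: "(\<integral>x. norm (F n x) \<partial>Mpos) \<le> cmod (c n) / sqrt (r n) * K" for n
  proof -
    have "(\<integral>x. norm (F n x) \<partial>Mpos) = cmod (c n) * (\<integral>x. cmod (f (r n * x) * cnj (g x)) \<partial>Mpos)"
      by (simp add: F_def norm_mult)
    also have "\<dots> \<le> cmod (c n) * (K / sqrt (r n))"
      using bound(2)[of n] by (intro mult_left_mono) (simp_all add: K_def field_simps)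
    finally show ?thesis by simp
  qed
  have sumF: "summable (\<lambda>n. \<integral>x. norm (F n x) \<partial>Mpos)"
  proof (rule summable_comparison_test[OF _ summable_mult2[OF admissibleD(2)[OF adm], of K]])
    show "\<exists>N. \<forall>n\<ge>N. norm (\<integral>x. norm (F n x) \<partial>Mpos) \<le> cmod (c n) / sqrt (r n) * K"
      using nF by (intro exI[of _ 0]) (auto simp: integral_nonneg_AE)
  qed
  have aeF: "AE x in Mpos. summable (\<lambda>n. norm (F n x)) \<and> (\<Sum>n. F n x) = dil_series c r f x * cnj (g x)"
    using dil_series_L2(1)[OF adm f]
  proof eventually_elim
    case (elim x)
    have "summable (\<lambda>n. norm (F n x))"
      using summable_mult2[OF elim, of "cmod (g x)"] by (simp add: F_def norm_mult mult.assoc)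
    moreover have "(\<Sum>n. F n x) = dil_series c r f x * cnj (g x)"
      unfolding F_def dil_series_def mult.assoc[symmetric]
      by (rule suminf_mult2[symmetric]) (rule summable_norm_cancel[OF elim])
    ultimately show ?case by simp
  qed
  have "(\<lambda>n. integral\<^sup>L Mpos (F n)) sums (\<integral>x. (\<Sum>n. F n x) \<partial>Mpos)"
    by (rule sums_integral[OF Fi]) (use aeF sumF in auto)
  moreover have "(\<integral>x. (\<Sum>n. F n x) \<partial>Mpos) = L2inner (dil_series c r f) g"
    unfolding L2inner_def using aeF by (intro integral_cong_AE) (auto simp: F_def elim!: AE_mp)
  ultimately show ?thesis by (simp add: F_def L2inner_def)
qed

text \<open>The adjoint identity <D(c,r) f, g> = <f, D(c',r') g>: expand both sides term by term
  and move each dilation across the inner product.\<close>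
lemma dil_series_adjoint:
  assumes adm: "admissible c r" and f: "f \<in> L2pos" and g: "g \<in> L2pos"
  shows "L2inner (dil_series c r f) g = L2inner f (dil_series (adj_coef c r) (adj_scale r) g)"
proof -
  define c' where "c' = adj_coef c r"
  define r' where "r' = adj_scale r"
  have r: "\<And>n. r n > 0" using admissibleD(1)[OF adm] .
  have adm': "admissible c' r'" unfolding c'_def r'_def by (rule admissible_adj[OF adm])
  have "(\<lambda>n. cnj (c' n * L2inner (\<lambda>y. g (r' n * y)) f)) sums L2inner f (dil_series c' r' g)"
    using dil_series_inner_sums[OF adm' g f] by (simp only: sums_cnj L2inner_cnj[of f])
  moreover have "cnj (c' n * L2inner (\<lambda>y. g (r' n * y)) f) = c n * L2inner (\<lambda>x. f (r n * x)) g" for n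
    using r[of n] dilation_inner_swap[OF r f g, of n]
    by (simp add: c'_def r'_def adj_coef_def adj_scale_def L2inner_cnj[of _ f])
  ultimately have "(\<lambda>n. c n * L2inner (\<lambda>x. f (r n * x)) g) sums L2inner f (dil_series c' r' g)"
    by simp
  with dil_series_inner_sums[OF adm f g] show ?thesis
    unfolding c'_def r'_def by (rule sums_unique2)
qed


section \<open>Composition of dilation series\<close>

lemma infsum_eq_suminf:
  fixes f :: "nat \<Rightarrow> 'a::banach"
  assumes "summable (\<lambda>n. norm (f n))"
  shows "infsum f UNIV = suminf f"
  by (rule infsumI, rule norm_summable_imp_has_sum[OF assms])
     (rule summable_sums[OF summable_norm_cancel[OF assms]])

lemma double_series_iterated:
  fixes \<Phi> :: "nat \<times> nat \<Rightarrow> 'a::banach"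
  assumes row: "\<And>m. summable (\<lambda>n. norm (\<Phi> (m, n)))"
    and col: "summable (\<lambda>m. \<Sum>n. norm (\<Phi> (m, n)))"
  shows "(\<lambda>p. norm (\<Phi> p)) summable_on UNIV" and "(\<Sum>m. \<Sum>n. \<Phi> (m, n)) = infsum \<Phi> UNIV"
proof -
  have rowsum: "infsum (\<lambda>n. norm (\<Phi> (m, n))) UNIV = (\<Sum>n. norm (\<Phi> (m, n)))" for m
    by (rule infsum_eq_suminf) (use row[of m] in simp)
  have "(\<lambda>p. norm (\<Phi> p)) summable_on Sigma UNIV (\<lambda>_. UNIV)"
  proof (subst Infinite_Sum.abs_summable_on_Sigma_iff, intro conjI ballI)
    show "(\<lambda>n. norm (\<Phi> (m, n))) summable_on UNIV" for m
      by (rule norm_summable_imp_summable_on) (use row[of m] in simp)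
    show "(\<lambda>m. norm (infsum (\<lambda>n. norm (\<Phi> (m, n))) UNIV)) summable_on UNIV"
      unfolding rowsum
      by (rule norm_summable_imp_summable_on) (use col in \<open>simp add: suminf_nonneg[OF row]\<close>)
  qed
  then show abs: "(\<lambda>p. norm (\<Phi> p)) summable_on UNIV" by simp
  have inner: "infsum (\<lambda>n. \<Phi> (m, n)) UNIV = (\<Sum>n. \<Phi> (m, n))" for m
    by (rule infsum_eq_suminf[OF row])
  have "(\<Sum>m. \<Sum>n. \<Phi> (m, n)) = infsum (\<lambda>m. \<Sum>n. \<Phi> (m, n)) UNIV"
  proof (rule infsum_eq_suminf[symmetric], rule summable_comparison_test[OF _ col])
    show "\<exists>N. \<forall>m\<ge>N. norm (norm (\<Sum>n. \<Phi> (m, n))) \<le> (\<Sum>n. norm (\<Phi> (m, n)))"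
      using summable_norm[OF row] by auto
  qed
  also have "\<dots> = infsum (\<lambda>m. infsum (\<lambda>n. \<Phi> (m, n)) UNIV) UNIV" by (simp add: inner)
  also have "\<dots> = infsum \<Phi> (Sigma UNIV (\<lambda>_. UNIV))"
    by (rule infsum_Sigma_banach) (use abs_summable_summable[OF abs] in simp)
  finally show "(\<Sum>m. \<Sum>n. \<Phi> (m, n)) = infsum \<Phi> UNIV" by simp
qed

text \<open>Absolute convergence comes from applying the boundedness
  result to the nonnegative series D(|d|,s) |u|.\<close>
lemma dil_series_compose:
  assumes admc: "admissible c r" and admd: "admissible d s" and u: "u \<in> L2pos"
  shows "AE x in Mpos. (\<lambda>p. norm (c (fst p) * d (snd p) * u (s (snd p) * (r (fst p) * x)))) summable_on UNIV
     \<and> dil_series c r (dil_series d s u) x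
         = infsum (\<lambda>p. c (fst p) * d (snd p) * u (s (snd p) * (r (fst p) * x))) UNIV"
proof -
  define V where "V = dil_series (\<lambda>n. complex_of_real (cmod (d n))) s (\<lambda>y. complex_of_real (cmod (u y)))"
  have "admissible (\<lambda>n. complex_of_real (cmod (d n))) s" using admd by (simp add: admissible_def)
  moreover have "(\<lambda>y. complex_of_real (cmod (u y))) \<in> L2pos" using u by (auto simp: L2pos_def)
  ultimately have V: "V \<in> L2pos" unfolding V_def by (rule dil_series_L2(2))
  have rows: "AE x in Mpos. \<forall>m. summable (\<lambda>n. cmod (d n * u (s n * (r m * x))))"
    by (subst AE_all_countable) (intro allI AE_dilation[OF admissibleD(1)[OF admc]] dil_series_L2(1)[OF admd u])
  have cols: "AE x in Mpos. summable (\<lambda>m. cmod (c m * V (r m * x)))"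
    by (rule dil_series_L2(1)[OF admc V])
  show ?thesis using rows cols
  proof eventually_elim
    case (elim x)
    define \<Phi> where "\<Phi> = (\<lambda>p. c (fst p) * d (snd p) * u (s (snd p) * (r (fst p) * x)))"
    have row: "summable (\<lambda>n. norm (\<Phi> (m, n)))" for m
      using summable_mult[OF elim(1)[rule_format, of m], of "cmod (c m)"]
      by (simp add: \<Phi>_def norm_mult mult.assoc)
    have V_row: "V (r m * x) = complex_of_real (\<Sum>n. cmod (d n * u (s n * (r m * x))))" for m
    proof -
      have "V (r m * x) = (\<Sum>n. complex_of_real (cmod (d n * u (s n * (r m * x)))))"
        by (simp add: V_def dil_series_def norm_mult)
      also have "\<dots> = complex_of_real (\<Sum>n. cmod (d n * u (s n * (r m * x))))"
        by (rule suminf_of_real[symmetric, OF elim(1)[rule_format]])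
      finally show ?thesis .
    qed
    have "(\<Sum>n. norm (\<Phi> (m, n))) = cmod (c m * V (r m * x))" for m
      using suminf_mult[OF elim(1)[rule_format, of m], of "cmod (c m)"]
        suminf_nonneg[OF elim(1)[rule_format, of m]]
      by (simp add: V_row \<Phi>_def norm_mult mult.assoc)
    then have col: "summable (\<lambda>m. \<Sum>n. norm (\<Phi> (m, n)))" using elim(2) by simp
    have "dil_series c r (dil_series d s u) x = (\<Sum>m. \<Sum>n. \<Phi> (m, n))"
    proof -
      have "c m * dil_series d s u (r m * x) = (\<Sum>n. \<Phi> (m, n))" for m
        unfolding dil_series_def \<Phi>_def using summable_norm_cancel[OF elim(1)[rule_format, of m]]
        by (simp add: suminf_mult mult.assoc)
      then show ?thesis by (simp add: dil_series_def[of c r])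
    qed
    with double_series_iterated[OF row col] show ?case unfolding \<Phi>_def by simp
  qed
qed


section \<open>Dirichlet convolution\<close>

text \<open>Dirichlet convolution is commutative (substitute d \<mapsto> k / d), so the convolution inverse
  relation is symmetric; it is also compatible with complex conjugation.\<close>
lemma dirichlet_conv_commute: "dirichlet_conv a b k = dirichlet_conv b a k"
proof (cases "k = 0")
  case True then show ?thesis by (simp add: dirichlet_conv_def)
next
  case False
  have "dirichlet_conv a b k = (\<Sum>d | d dvd k. a (k div d) * b (k div (k div d)))"
    unfolding dirichlet_conv_def
    by (rule sum.reindex_bij_witness[of _ "\<lambda>d. k div d" "\<lambda>d. k div d"])
       (use False in \<open>auto simp: div_div_eq_right dvd_div_eq_mult elim!: dvdE\<close>)
  also have "\<dots> = dirichlet_conv b a k"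
    unfolding dirichlet_conv_def
    by (intro sum.cong refl) (use False in \<open>auto simp: mult.commute elim!: dvdE\<close>)
  finally show ?thesis .
qed

lemma conv_inverse_sym: "conv_inverse a b \<Longrightarrow> conv_inverse b a"
  unfolding conv_inverse_def using dirichlet_conv_commute by metis

lemma conv_inverse_cnj:
  assumes "conv_inverse a b"
  shows "conv_inverse (\<lambda>n. cnj (a n)) (\<lambda>n. cnj (b n))"
proof -
  have "dirichlet_conv (\<lambda>n. cnj (a n)) (\<lambda>n. cnj (b n)) k = cnj (dirichlet_conv a b k)" for k
    by (simp add: dirichlet_conv_def)
  then show ?thesis using assms by (simp add: conv_inverse_def)
qed

lemma divisor_pairs_finite: "finite {p::nat \<times> nat. Suc (fst p) * Suc (snd p) = k}"
proof (rule finite_subset)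
  show "{p::nat \<times> nat. Suc (fst p) * Suc (snd p) = k} \<subseteq> {..k} \<times> {..k}"
  proof
    fix p assume "p \<in> {p::nat \<times> nat. Suc (fst p) * Suc (snd p) = k}"
    then obtain m n where p: "p = (m, n)" "Suc m * Suc n = k" by (cases p) auto
    then have "Suc m \<le> k" "Suc n \<le> k" by auto
    then show "p \<in> {..k} \<times> {..k}" using p by auto
  qed
qed auto

lemma divisor_pairs_sum:
  assumes k: "k > 0"
  shows "(\<Sum>p\<in>{p::nat \<times> nat. Suc (fst p) * Suc (snd p) = k}. \<alpha> (Suc (fst p)) * \<beta> (Suc (snd p)))
    = dirichlet_conv \<alpha> \<beta> k"
  unfolding dirichlet_conv_def
proof (rule sum.reindex_bij_witness[of _ "\<lambda>d. (d - 1, k div d - 1)" "\<lambda>p. Suc (fst p)"])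
  fix p :: "nat \<times> nat" assume "p \<in> {p. Suc (fst p) * Suc (snd p) = k}"
  then obtain m n where mn: "p = (m, n)" "Suc m * Suc n = k" by (cases p) auto
  have kd: "k div Suc m = Suc n" using mn(2) by (metis nonzero_mult_div_cancel_left nat.distinct(1))
  show "(Suc (fst p) - 1, k div Suc (fst p) - 1) = p" using mn kd by simp
  show "Suc (fst p) \<in> {d. d dvd k}" using mn(1) mn(2)[symmetric] by (simp del: mult_Suc mult_Suc_right)
  show "\<alpha> (Suc (fst p)) * \<beta> (k div Suc (fst p)) = \<alpha> (Suc (fst p)) * \<beta> (Suc (snd p))" using mn kd by simp
next
  fix d assume "d \<in> {d. d dvd k}"
  then obtain e where e: "k = d * e" by (auto elim: dvdE)
  with k have d0: "d > 0" "e > 0" by auto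
  then show "Suc (fst (d - 1, k div d - 1)) = d" by simp
  have kd: "k div d = e" using e d0 by simp
  have "Suc (d - 1) = d" "Suc (e - 1) = e" using d0 by auto
  then show "(d - 1, k div d - 1) \<in> {p. Suc (fst p) * Suc (snd p) = k}"
    unfolding mem_Collect_eq fst_conv snd_conv kd using e by simp
qed

text \<open>The algebraic heart of the argument: if \<alpha> * \<beta> = \<delta>, then grouping a summable double
  series \<Sum>(m,n) \<psi>((m+1)(n+1)) \<alpha>(m+1) \<beta>(n+1) along k = (m+1)(n+1) leaves only the term \<psi>(1).\<close>
lemma conv_inverse_double_sum:
  fixes \<psi> :: "nat \<Rightarrow> complex"
  assumes inv: "conv_inverse \<alpha> \<beta>"
    and sm: "(\<lambda>p. \<psi> (Suc (fst p) * Suc (snd p)) * (\<alpha> (Suc (fst p)) * \<beta> (Suc (snd p)))) summable_on UNIV"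
  shows "infsum (\<lambda>p. \<psi> (Suc (fst p) * Suc (snd p)) * (\<alpha> (Suc (fst p)) * \<beta> (Suc (snd p)))) UNIV = \<psi> 1"
proof -
  define \<Phi> where "\<Phi> = (\<lambda>p::nat \<times> nat. \<psi> (Suc (fst p) * Suc (snd p)) * (\<alpha> (Suc (fst p)) * \<beta> (Suc (snd p))))"
  define B where "B = (\<lambda>k. {p::nat \<times> nat. Suc (fst p) * Suc (snd p) = k})"
  have bij: "bij_betw snd (Sigma UNIV B) UNIV"
    by (rule bij_betwI[of _ _ _ "\<lambda>p. (Suc (fst p) * Suc (snd p), p)"]) (auto simp: B_def)
  have fiber: "infsum \<Phi> (B k) = (if k = 1 then \<psi> 1 else 0)" for k
  proof (cases "k = 0")
    case True
    then have "B k = {}" by (auto simp: B_def)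
    then show ?thesis using True by simp
  next
    case False
    have "infsum \<Phi> (B k) = (\<Sum>p\<in>B k. \<psi> k * (\<alpha> (Suc (fst p)) * \<beta> (Suc (snd p))))"
      unfolding B_def using divisor_pairs_finite by (simp add: \<Phi>_def)
    also have "\<dots> = \<psi> k * (\<Sum>p\<in>B k. \<alpha> (Suc (fst p)) * \<beta> (Suc (snd p)))"
      by (rule sum_distrib_left[symmetric])
    also have "\<dots> = \<psi> k * dirichlet_conv \<alpha> \<beta> k"
      using False by (simp only: B_def divisor_pairs_sum)
    also have "\<dots> = (if k = 1 then \<psi> 1 else 0)"
      using inv False unfolding conv_inverse_def by auto
    finally show ?thesis .
  qed
  have "infsum \<Phi> UNIV = infsum (\<lambda>q. \<Phi> (snd q)) (Sigma UNIV B)"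
    by (rule infsum_reindex_bij_betw[OF bij, symmetric])
  also have "\<dots> = infsum (\<lambda>k. infsum (\<lambda>p. \<Phi> (snd (k, p))) (B k)) UNIV"
  proof (rule infsum_Sigma_banach[symmetric])
    show "(\<lambda>q. \<Phi> (snd q)) summable_on Sigma UNIV B"
      using sm unfolding \<Phi>_def by (subst summable_on_reindex_bij_betw[OF bij])
  qed
  also have "\<dots> = infsum (\<lambda>k::nat. if k = 1 then \<psi> 1 else 0) {1}"
    unfolding snd_conv fiber by (rule infsum_cong_neutral) auto
  also have "\<dots> = \<psi> 1" by simp
  finally show ?thesis unfolding \<Phi>_def .
qed


section \<open>The operators T(\<alpha>) and their adjoints\<close>

text \<open>T(\<alpha>) is the dilation series with coefficients \<alpha>(n+1) and factors n+1 (indices shifted to start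
  at 0).\<close>
definition Tcoef :: "(nat \<Rightarrow> complex) \<Rightarrow> nat \<Rightarrow> complex" where
  "Tcoef \<alpha> n = \<alpha> (Suc n)"

definition Tscale :: "nat \<Rightarrow> real" where
  "Tscale n = real (Suc n)"

lemma Tscale_pos: "Tscale n > 0"
  by (simp add: Tscale_def)

lemma Tmult_dil_series: "Tmult \<alpha> = dil_series (Tcoef \<alpha>) Tscale"
  by (auto simp: fun_eq_iff Tmult_def dil_series_def Tcoef_def Tscale_def)

lemma admissible_T:
  "admissible (Tcoef \<alpha>) Tscale \<longleftrightarrow> summable (\<lambda>n. cmod (\<alpha> (Suc n)) / sqrt (real (Suc n)))"
  by (simp add: admissible_def Tcoef_def Tscale_def)

definition Tadj :: "(nat \<Rightarrow> complex) \<Rightarrow> (real \<Rightarrow> complex) \<Rightarrow> real \<Rightarrow> complex" where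
  "Tadj \<alpha> = dil_series (adj_coef (Tcoef \<alpha>) Tscale) (adj_scale Tscale)"

lemma T_adjoint:
  assumes "admissible (Tcoef \<beta>) Tscale" "u \<in> L2pos" "v \<in> L2pos"
  shows "L2inner (Tmult \<beta> u) v = L2inner u (Tadj \<beta> v)"
  unfolding Tmult_dil_series Tadj_def by (rule dil_series_adjoint[OF assms])

lemma Tadj_adjoint:
  assumes "admissible (Tcoef \<beta>) Tscale" "u \<in> L2pos" "v \<in> L2pos"
  shows "L2inner (Tadj \<beta> u) v = L2inner u (Tmult \<beta> v)"
  using dil_series_adjoint[OF admissible_adj[OF assms(1)] assms(2,3)]
  unfolding Tmult_dil_series Tadj_def adj_coef_adj[OF Tscale_pos] adj_scale_adj .

lemma T_L2:
  assumes "admissible (Tcoef \<beta>) Tscale" "u \<in> L2pos"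
  shows "Tmult \<beta> u \<in> L2pos"
  unfolding Tmult_dil_series by (rule dil_series_L2(2)[OF assms])

lemma Tadj_L2:
  assumes "admissible (Tcoef \<beta>) Tscale" "u \<in> L2pos"
  shows "Tadj \<beta> u \<in> L2pos"
  unfolding Tadj_def by (rule dil_series_L2(2)[OF admissible_adj assms(2)]) (rule assms(1))

lemma T_measurable: "u \<in> borel_measurable Mpos \<Longrightarrow> Tmult \<beta> u \<in> borel_measurable Mpos"
  unfolding Tmult_dil_series by (rule dil_series_measurable[OF Tscale_pos])

lemma Tadj_measurable: "u \<in> borel_measurable Mpos \<Longrightarrow> Tadj \<beta> u \<in> borel_measurable Mpos"
  unfolding Tadj_def by (rule dil_series_measurable) (simp_all add: adj_scale_def Tscale_pos)

text \<open>Dirichlet convolution becomes composition: T(\<alpha>) T(\<beta>) = I when \<alpha> * \<beta> = \<delta>.  The double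
  series of T(\<alpha>) T(\<beta>) u (x) is \<Sum>(m,n) \<alpha>(m) \<beta>(n) u(m n x).\<close>
lemma T_inverse:
  assumes inv: "conv_inverse \<alpha> \<beta>"
    and adma: "admissible (Tcoef \<alpha>) Tscale" and admb: "admissible (Tcoef \<beta>) Tscale"
    and u: "u \<in> L2pos"
  shows "AE x in Mpos. Tmult \<alpha> (Tmult \<beta> u) x = u x"
  using dil_series_compose[OF adma admb u] unfolding Tmult_dil_series
proof eventually_elim
  case (elim x)
  define \<psi> where "\<psi> = (\<lambda>k::nat. u (real k * x))"
  have eq: "(\<lambda>p. Tcoef \<alpha> (fst p) * Tcoef \<beta> (snd p) * u (Tscale (snd p) * (Tscale (fst p) * x)))
      = (\<lambda>p. \<psi> (Suc (fst p) * Suc (snd p)) * (\<alpha> (Suc (fst p)) * \<beta> (Suc (snd p))))"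
  proof
    fix p :: "nat \<times> nat"
    have "Tscale (snd p) * (Tscale (fst p) * x) = real (Suc (fst p) * Suc (snd p)) * x"
      by (simp only: Tscale_def of_nat_mult mult_ac)
    then show "Tcoef \<alpha> (fst p) * Tcoef \<beta> (snd p) * u (Tscale (snd p) * (Tscale (fst p) * x))
        = \<psi> (Suc (fst p) * Suc (snd p)) * (\<alpha> (Suc (fst p)) * \<beta> (Suc (snd p)))"
      unfolding \<psi>_def by (simp only: Tcoef_def mult_ac)
  qed
  have "(\<lambda>p. \<psi> (Suc (fst p) * Suc (snd p)) * (\<alpha> (Suc (fst p)) * \<beta> (Suc (snd p)))) summable_on UNIV"
    using abs_summable_summable[OF conjunct1[OF elim]] unfolding eq .
  from conv_inverse_double_sum[OF inv this] elim show ?case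
    unfolding eq by (simp add: \<psi>_def)
qed

text \<open>Likewise T*(\<alpha>) T*(\<beta>) = I when \<alpha> * \<beta> = \<delta>: its double series is
  \<Sum>(m,n) conj(\<alpha>(m) \<beta>(n)) u(x/(m n)) / (m n), and conj \<alpha> * conj \<beta> = \<delta>.\<close>
lemma Tadj_inverse:
  assumes inv: "conv_inverse \<alpha> \<beta>"
    and adma: "admissible (Tcoef \<alpha>) Tscale" and admb: "admissible (Tcoef \<beta>) Tscale"
    and u: "u \<in> L2pos"
  shows "AE x in Mpos. Tadj \<alpha> (Tadj \<beta> u) x = u x"
  using dil_series_compose[OF admissible_adj[OF adma] admissible_adj[OF admb] u] unfolding Tadj_def
proof eventually_elim
  case (elim x)
  define \<psi> where "\<psi> = (\<lambda>k::nat. u (x / real k) / complex_of_real (real k))"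
  have eq: "(\<lambda>p. adj_coef (Tcoef \<alpha>) Tscale (fst p) * adj_coef (Tcoef \<beta>) Tscale (snd p)
        * u (adj_scale Tscale (snd p) * (adj_scale Tscale (fst p) * x)))
      = (\<lambda>p. \<psi> (Suc (fst p) * Suc (snd p)) * (cnj (\<alpha> (Suc (fst p))) * cnj (\<beta> (Suc (snd p)))))"
  proof
    fix p :: "nat \<times> nat"
    have "adj_scale Tscale (snd p) * (adj_scale Tscale (fst p) * x) = x / real (Suc (fst p) * Suc (snd p))"
      by (simp add: adj_scale_def Tscale_def algebra_simps)
    moreover have "adj_coef (Tcoef \<alpha>) Tscale (fst p) * adj_coef (Tcoef \<beta>) Tscale (snd p)
        = cnj (\<alpha> (Suc (fst p))) * cnj (\<beta> (Suc (snd p))) / complex_of_real (real (Suc (fst p) * Suc (snd p)))"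
      by (simp add: adj_coef_def Tcoef_def Tscale_def algebra_simps)
    ultimately show "adj_coef (Tcoef \<alpha>) Tscale (fst p) * adj_coef (Tcoef \<beta>) Tscale (snd p)
        * u (adj_scale Tscale (snd p) * (adj_scale Tscale (fst p) * x))
      = \<psi> (Suc (fst p) * Suc (snd p)) * (cnj (\<alpha> (Suc (fst p))) * cnj (\<beta> (Suc (snd p))))"
      unfolding \<psi>_def by (simp only: divide_inverse mult_ac)
  qed
  have "(\<lambda>p. \<psi> (Suc (fst p) * Suc (snd p)) * (cnj (\<alpha> (Suc (fst p))) * cnj (\<beta> (Suc (snd p)))))
      summable_on UNIV"
    using abs_summable_summable[OF conjunct1[OF elim]] unfolding eq .
  from conv_inverse_double_sum[OF conv_inverse_cnj[OF inv] this] elim show ?case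
    unfolding eq by (simp add: \<psi>_def)
qed

text \<open>T(\<beta>) and T*(\<beta>) commute: both composites are the same double series up to swapping
  the two summation indices.\<close>
lemma T_Tadj_commute:
  assumes adm: "admissible (Tcoef \<beta>) Tscale" and u: "u \<in> L2pos"
  shows "AE x in Mpos. Tmult \<beta> (Tadj \<beta> u) x = Tadj \<beta> (Tmult \<beta> u) x"
  using dil_series_compose[OF adm admissible_adj[OF adm] u]
    dil_series_compose[OF admissible_adj[OF adm] adm u]
  unfolding Tmult_dil_series Tadj_def
proof eventually_elim
  case (elim x)
  define c where "c = Tcoef \<beta>"
  define c' where "c' = adj_coef (Tcoef \<beta>) Tscale"
  define r' where "r' = adj_scale Tscale"
  define \<Phi> where "\<Phi> = (\<lambda>p. c (fst p) * c' (snd p) * u (r' (snd p) * (Tscale (fst p) * x)))"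
  have "infsum (\<lambda>p. c' (fst p) * c (snd p) * u (Tscale (snd p) * (r' (fst p) * x))) UNIV
      = infsum (\<lambda>p. \<Phi> (prod.swap p)) UNIV"
    by (intro Infinite_Sum.infsum_cong) (simp add: \<Phi>_def mult_ac)
  also have "\<dots> = infsum \<Phi> UNIV"
    by (rule infsum_reindex_bij_betw) (auto simp: bij_betw_def)
  finally show ?case using elim unfolding \<Phi>_def c_def c'_def r'_def by simp
qed

lemma Tadj_AE_cong:
  assumes "AE x in Mpos. f x = g x"
  shows "AE x in Mpos. Tadj \<beta> f x = Tadj \<beta> g x"
  unfolding Tadj_def by (rule dil_series_AE_cong[OF _ assms]) (simp add: adj_scale_def Tscale_pos)

text \<open>With u = T(a) f and v = T*(b) u,
  |v|^2 = <u, T(b) v> = <u, T*(b) T(b) u> = <u, T*(b) f> = <T(b) u, f> = <f, f>,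
  using T(b) T*(b) = T*(b) T(b) and T(b) T(a) = I.\<close>
lemma Tadj_T_isometry:
  assumes inv: "conv_inverse a b"
    and adma: "admissible (Tcoef a) Tscale" and admb: "admissible (Tcoef b) Tscale"
    and f: "f \<in> L2pos"
  shows "L2norm (Tadj b (Tmult a f)) = L2norm f"
proof -
  define u where "u = Tmult a f"
  define v where "v = Tadj b u"
  have u: "u \<in> L2pos" unfolding u_def by (rule T_L2[OF adma f])
  have v: "v \<in> L2pos" unfolding v_def by (rule Tadj_L2[OF admb u])
  have um: "u \<in> borel_measurable Mpos" and fm: "f \<in> borel_measurable Mpos"
    using L2posD(1) u f by auto
  have Tbu: "AE x in Mpos. Tmult b u x = f x"
    unfolding u_def by (rule T_inverse[OF conv_inverse_sym[OF inv] admb adma f])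
  have Tbv: "AE x in Mpos. Tmult b v x = Tadj b f x"
    using T_Tadj_commute[OF admb u] Tadj_AE_cong[OF Tbu, of b] unfolding v_def
    by eventually_elim simp
  have "L2inner v v = L2inner u (Tmult b v)"
    unfolding v_def by (rule Tadj_adjoint[OF admb u v[unfolded v_def]])
  also have "\<dots> = L2inner u (Tadj b f)"
    using Tbv by (intro L2inner_AE_cong um T_measurable Tadj_measurable fm)
      (auto simp: L2posD(1)[OF v])
  also have "\<dots> = L2inner (Tmult b u) f"
    by (rule T_adjoint[OF admb u f, symmetric])
  also have "\<dots> = L2inner f f"
    using Tbu by (intro L2inner_AE_cong T_measurable um fm) auto
  finally have "complex_of_real ((L2norm v)\<^sup>2) = complex_of_real ((L2norm f)\<^sup>2)"
    by (simp only: L2inner_self[OF v] L2inner_self[OF f])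
  then have "(L2norm v)\<^sup>2 = (L2norm f)\<^sup>2" by (simp only: of_real_eq_iff)
  then show ?thesis unfolding v_def u_def
    using L2norm_nonneg by (metis power2_eq_iff_nonneg)
qed


section \<open>The operator F = T(conj b) S T(a)\<close>

text \<open>S F = T*(b) T(a): conjugating by the reflection S turns T(conj b) into T*(b).\<close>
lemma Sop_Fop:
  assumes adma: "admissible (Tcoef a) Tscale" and admb: "admissible (Tcoef b) Tscale"
    and f: "f \<in> L2pos"
  shows "AE x in Mpos. Sop (Fop a b f) x = Tadj b (Tmult a f) x"
proof -
  define A where "A = Tmult a f"
  define c' where "c' = adj_coef (Tcoef b) Tscale"
  define r' where "r' = adj_scale Tscale"
  have A: "A \<in> L2pos" unfolding A_def by (rule T_L2[OF adma f])
  have "AE x in Mpos. x > 0" by (rule AE_I2) simp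
  with dil_series_L2(1)[OF admissible_adj[OF admb] A]
  show ?thesis unfolding A_def[symmetric] c'_def[symmetric] r'_def[symmetric]
  proof eventually_elim
    case (elim x)
    have x: "x > 0" using elim(2) .
    have s: "summable (\<lambda>n. c' n * A (r' n * x))" by (rule summable_norm_cancel[OF elim(1)])
    have summand: "cnj (b (Suc n)) * Sop A (real (Suc n) * (1 / x))
        = complex_of_real x * (c' n * A (r' n * x))" for n
    proof -
      have "1 / (real (Suc n) * (1 / x)) = r' n * x"
        using x by (simp add: r'_def adj_scale_def Tscale_def)
      then have "Sop A (real (Suc n) * (1 / x)) = A (r' n * x) / complex_of_real (real (Suc n) * (1 / x))"
        by (simp only: Sop_def)
      then show ?thesis using x
        by (simp add: c'_def adj_coef_def Tcoef_def Tscale_def field_simps)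
    qed
    have "Sop (Fop a b f) x = (\<Sum>n. cnj (b (Suc n)) * Sop A (real (Suc n) * (1 / x))) / complex_of_real x"
      unfolding Fop_def A_def[symmetric] Sop_def[of "Tmult (\<lambda>n. cnj (b n)) (Sop A)"]
      by (simp add: Tmult_def[of "\<lambda>n. cnj (b n)"])
    also have "\<dots> = (\<Sum>n. complex_of_real x * (c' n * A (r' n * x))) / complex_of_real x"
      by (simp only: summand)
    also have "\<dots> = Tadj b A x"
      using suminf_mult[OF s] x unfolding Tadj_def dil_series_def c'_def r'_def by simp
    finally show ?case .
  qed
qed

lemma Fop_AE_cong:
  assumes "AE x in Mpos. f x = g x"
  shows "AE x in Mpos. Fop a b f x = Fop a b g x"
  unfolding Fop_def Tmult_dil_series
  by (intro dil_series_AE_cong Sop_AE_cong Tscale_pos assms)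

text \<open>F is an isometry of L^2: S F = T*(b) T(a) is one, and S is an isometric involution.\<close>
lemma Fop_isometry:
  assumes inv: "conv_inverse a b"
    and adma: "admissible (Tcoef a) Tscale" and admb: "admissible (Tcoef b) Tscale"
    and f: "f \<in> L2pos"
  shows "Fop a b f \<in> L2pos" and "L2norm (Fop a b f) = L2norm f"
proof -
  have Fm: "Fop a b f \<in> borel_measurable Mpos"
    unfolding Fop_def by (intro T_measurable Sop_measurable L2posD(1)[OF T_L2[OF adma f]])
  have TT: "Tadj b (Tmult a f) \<in> L2pos" by (rule Tadj_L2[OF admb T_L2[OF adma f]])
  have SF: "Sop (Fop a b f) \<in> L2pos" "L2norm (Sop (Fop a b f)) = L2norm f"
    using L2pos_AE_cong[OF TT Sop_measurable[OF Fm]] Sop_Fop[OF adma admb f]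
      Tadj_T_isometry[OF inv adma admb f]
    by (auto elim: AE_mp simp: eq_commute)
  have "AE x in Mpos. Sop (Sop (Fop a b f)) x = Fop a b f x"
    by (rule AE_I2) (simp add: Sop_Sop)
  from L2pos_AE_cong[OF Sop_L2(1)[OF SF(1)] Fm this] Sop_L2(2)[OF SF(1)] SF(2)
  show "Fop a b f \<in> L2pos" "L2norm (Fop a b f) = L2norm f" by simp_all
qed

lemma Fop_linear:
  assumes adma: "admissible (Tcoef a) Tscale" and admb: "admissible (Tcoef b) Tscale"
    and f: "f \<in> L2pos" and g: "g \<in> L2pos"
  shows "AE x in Mpos. Fop a b (\<lambda>y. f y + c * g y) x = Fop a b f x + c * Fop a b g x"
proof -
  have admb': "admissible (Tcoef (\<lambda>n. cnj (b n))) Tscale"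
    using admb by (simp add: admissible_T)
  have SA: "Sop (Tmult a f) \<in> L2pos" "Sop (Tmult a g) \<in> L2pos"
    using Sop_L2(1) T_L2[OF adma] f g by auto
  have "AE x in Mpos. Tmult a (\<lambda>y. f y + c * g y) x = Tmult a f x + c * Tmult a g x"
    unfolding Tmult_dil_series by (rule dil_series_linear[OF adma f g])
  then have "AE x in Mpos. Sop (Tmult a (\<lambda>y. f y + c * g y)) x
      = Sop (\<lambda>y. Tmult a f y + c * Tmult a g y) x"
    by (rule Sop_AE_cong)
  then have "AE x in Mpos. Fop a b (\<lambda>y. f y + c * g y) x
      = Tmult (\<lambda>n. cnj (b n)) (\<lambda>y. Sop (Tmult a f) y + c * Sop (Tmult a g) y) x"
    unfolding Fop_def Tmult_dil_series[of "\<lambda>n. cnj (b n)"] Sop_linear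
    by (rule dil_series_AE_cong[OF Tscale_pos])
  moreover have "AE x in Mpos. Tmult (\<lambda>n. cnj (b n)) (\<lambda>y. Sop (Tmult a f) y + c * Sop (Tmult a g) y) x
      = Fop a b f x + c * Fop a b g x"
    unfolding Fop_def Tmult_dil_series[of "\<lambda>n. cnj (b n)"]
    by (rule dil_series_linear[OF admb' SA])
  ultimately show ?thesis by eventually_elim simp
qed

text \<open>F is onto: for g in L^2, f = T(b) T*(a) S g satisfies S F f = T*(b) T(a) T(b) T*(a) S g
  = T*(b) T*(a) S g = S g, hence F f = g.\<close>
lemma Fop_surjective:
  assumes inv: "conv_inverse a b"
    and adma: "admissible (Tcoef a) Tscale" and admb: "admissible (Tcoef b) Tscale"
    and g: "g \<in> L2pos"
  shows "\<exists>f\<in>L2pos. AE x in Mpos. Fop a b f x = g x"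
proof
  define w where "w = Tadj a (Sop g)"
  have w: "w \<in> L2pos" unfolding w_def by (rule Tadj_L2[OF adma Sop_L2(1)[OF g]])
  define f where "f = Tmult b w"
  show f: "f \<in> L2pos" unfolding f_def by (rule T_L2[OF admb w])
  have "AE x in Mpos. Tadj b (Tmult a f) x = Tadj b w x"
    unfolding f_def by (rule Tadj_AE_cong[OF T_inverse[OF inv adma admb w]])
  moreover have "AE x in Mpos. Tadj b w x = Sop g x"
    unfolding w_def by (rule Tadj_inverse[OF conv_inverse_sym[OF inv] admb adma Sop_L2(1)[OF g]])
  ultimately have "AE x in Mpos. Sop (Fop a b f) x = Sop g x"
    using Sop_Fop[OF adma admb f] by eventually_elim simp
  then have "AE x in Mpos. Sop (Sop (Fop a b f)) x = Sop (Sop g) x" by (rule Sop_AE_cong)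
  then show "AE x in Mpos. Fop a b f x = g x"
    by (rule AE_mp) (intro AE_I2, simp add: Sop_Sop)
qed

lemma admissible_of_moment:
  assumes \<epsilon>: "\<epsilon> > 0" and sm: "summable (\<lambda>n. cmod (a (Suc n)) * real (Suc n) powr \<epsilon>)"
  shows "admissible (Tcoef a) Tscale"
  unfolding admissible_T
proof (rule summable_comparison_test[OF _ sm], intro exI allI impI)
  fix n :: nat
  have "1 / sqrt (real (Suc n)) \<le> 1" by simp
  also have "1 \<le> real (Suc n) powr \<epsilon>" using \<epsilon> by (intro ge_one_powr_ge_zero) auto
  finally show "norm (cmod (a (Suc n)) / sqrt (real (Suc n))) \<le> cmod (a (Suc n)) * real (Suc n) powr \<epsilon>"
    by (simp add: divide_inverse mult_left_mono)
qed


theorem theorem3: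
  fixes a b :: "nat \<Rightarrow> complex"
  assumes a1: "a 1 \<noteq> 0"
    and asum: "\<exists>\<epsilon>>0. summable (\<lambda>n. cmod (a (Suc n)) * real (Suc n) powr \<epsilon>)"
    and binv: "conv_inverse a b"
    and bsum: "summable (\<lambda>n. cmod (b (Suc n)) / sqrt (real (Suc n)))"
  shows "unitary_L2 (Fop a b)"
proof -
  have adma: "admissible (Tcoef a) Tscale" using asum admissible_of_moment by blast
  have admb: "admissible (Tcoef b) Tscale" using bsum by (simp add: admissible_T)
  show ?thesis
    unfolding unitary_L2_def
    using Fop_AE_cong Fop_isometry[OF binv adma admb] Fop_linear[OF adma admb]
      Fop_surjective[OF binv adma admb]
    by blast
qed

end
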